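(* Let $A$ and $B$ be two $n \times n \times n$ alternating sign hypermatrices. Then $A-B$ can be expressed as a sum of T-blocks.
   Context: An $n\times n\times n$ hypermatrix $A=[a_{ijk}]$ has row lines $A_{*jk}=[a_{ijk}: i=1,\dots,n]$, column lines $A_{i*k}=[a_{ijk}: j=1,\dots,n]$ and vertical lines $A_{ij*}=[a_{ijk}: k=1,\dots,n]$. An alternating sign hypermatrix (ASHM) is an $n\times n\times n$ hypermatrix with entries in $\{0,1,-1\}$ such that in every row line, column line and vertical line the non-zero entries alternate in sign, starting and ending with $+1$. For indices $i_1<i_2$, $j_1<j_2$, $k_1<k_2$ in $\{1,\dots,n\}$, the hypermatrix $T_{i_1,j_1,k_1:\,i_2,j_2,k_2}=[t_{ijk}]$ has $t_{ijk}=1$ for $(i,j,k)\in\{(i_1,j_1,k_1),(i_2,j_2,k_1),(i_2,j_1,k_2),(i_1,j_2,k_2)\}$, $t_{ijk}=-1$ for $(i,j,k)\in\{(i_2,j_1,k_1),(i_1,j_2,k_1),(i_1,j_1,k_2),(i_2,j_2,k_2)\}$, and $t_{ijk}=0$ otherwise. A T-block is a hypermatrix of the form $T_{i_1,j_1,k_1:\,i_2,j_2,k_2}$ or $-T_{i_1,j_1,k_1:\,i_2,j_2,k_2}$. *)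

theory Defs
  imports Main
begin

text \<open>An n x n x n hypermatrix is modelled as a function nat => nat => nat => int;
  only the entries with indices in {1..n} are relevant.\<close>
type_synonym hypermatrix = "nat \<Rightarrow> nat \<Rightarrow> nat \<Rightarrow> int"

definition alternating_pm :: "int list \<Rightarrow> bool" where
  "alternating_pm xs \<longleftrightarrow> xs \<noteq> [] \<and> hd xs = 1 \<and> last xs = 1 \<and>
     (\<forall>i. Suc i < length xs \<longrightarrow> xs ! Suc i = - (xs ! i))"

definition alt_line :: "nat \<Rightarrow> (nat \<Rightarrow> int) \<Rightarrow> bool" where
  "alt_line n a \<longleftrightarrow> alternating_pm (filter (\<lambda>x. x \<noteq> 0) (map a [1..<Suc n]))"

definition ASHM :: "nat \<Rightarrow> hypermatrix \<Rightarrow> bool" where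
  "ASHM n A \<longleftrightarrow>
     (\<forall>i\<in>{1..n}. \<forall>j\<in>{1..n}. \<forall>k\<in>{1..n}. A i j k \<in> {0, 1, -1}) \<and>
     (\<forall>j\<in>{1..n}. \<forall>k\<in>{1..n}. alt_line n (\<lambda>i. A i j k)) \<and>
     (\<forall>i\<in>{1..n}. \<forall>k\<in>{1..n}. alt_line n (\<lambda>j. A i j k)) \<and>
     (\<forall>i\<in>{1..n}. \<forall>j\<in>{1..n}. alt_line n (\<lambda>k. A i j k))"

definition Tblock :: "nat \<Rightarrow> nat \<Rightarrow> nat \<Rightarrow> nat \<Rightarrow> nat \<Rightarrow> nat \<Rightarrow> hypermatrix" where
  "Tblock i1 j1 k1 i2 j2 k2 = (\<lambda>i j k.
     if (i, j, k) \<in> {(i1,j1,k1), (i2,j2,k1), (i2,j1,k2), (i1,j2,k2)} then 1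
     else if (i, j, k) \<in> {(i2,j1,k1), (i1,j2,k1), (i1,j1,k2), (i2,j2,k2)} then -1
     else 0)"

definition is_Tblock :: "nat \<Rightarrow> hypermatrix \<Rightarrow> bool" where
  "is_Tblock n M \<longleftrightarrow> (\<exists>i1 j1 k1 i2 j2 k2 s.
     1 \<le> i1 \<and> i1 < i2 \<and> i2 \<le> n \<and> 1 \<le> j1 \<and> j1 < j2 \<and> j2 \<le> n \<and>
     1 \<le> k1 \<and> k1 < k2 \<and> k2 \<le> n \<and> s \<in> {1, -1} \<and>
     M = (\<lambda>i j k. s * Tblock i1 j1 k1 i2 j2 k2 i j k))"

end

theory Submission
  imports Defs
begin

(* Every line of an ASHM sums to 1, so every line of D = A - B sums to 0. With
   e_(i,n) = delta_i - delta_n, the block T_(i,j,k : n,n,n) is the tensor product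
   e_(i,n) (x) e_(j,n) (x) e_(k,n), and a vector g on {1..n} with coordinate sum 0 equals
   sum_(i<n) g i * e_(i,n). Expanding D this way in all three directions gives
   D = sum_(i,j,k<n) D i j k * T_(i,j,k : n,n,n), an integer combination of T-blocks;
   a coefficient c contributes |c| copies of the block with sign sgn c. *)

lemma sum_list_alternating:
  fixes xs :: "'a::ring_1 list"
  assumes "xs \<noteq> []" and "\<forall>i. Suc i < length xs \<longrightarrow> xs ! Suc i = - (xs ! i)"
  shows "2 * sum_list xs = hd xs + last xs"
  using assms
proof (induction xs)
  case Nil
  then show ?case by simp
next
  case (Cons x xs)
  show ?case
  proof (cases "xs = []")
    case True
    then show ?thesis by (simp add: mult_2)
  next
    case False
    have alt: "\<forall>i. Suc i < length xs \<longrightarrow> xs ! Suc i = - (xs ! i)"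
      using Cons.prems(2) by (metis Suc_less_eq length_Cons nth_Cons_Suc)
    have "hd xs = - x"
      using Cons.prems(2) False by (metis hd_conv_nth length_greater_0_conv nth_Cons_0
          nth_Cons_Suc length_Cons Suc_less_eq)
    then show ?thesis
      using Cons.IH[OF False alt] False by (simp add: distrib_left mult_2)
  qed
qed

lemma alternating_pm_sum_list:
  assumes "alternating_pm xs"
  shows "sum_list xs = 1"
proof -
  have "2 * sum_list xs = 2"
    using assms sum_list_alternating[of xs] unfolding alternating_pm_def by simp
  then show ?thesis by simp
qed

lemma alt_line_sum:
  assumes "alt_line n a"
  shows "(\<Sum>i=1..n. a i) = 1"
proof -
  let ?line = "map a [1..<Suc n]"
  have "sum_list (filter (\<lambda>x. x \<noteq> 0) ?line) = 1"
    using assms alternating_pm_sum_list unfolding alt_line_def by blast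
  moreover have "sum_list (filter (\<lambda>x. x \<noteq> 0) ?line) = sum_list ?line"
    using sum_list_map_filter[of ?line "\<lambda>x. x \<noteq> 0" "\<lambda>x. x"] by simp
  moreover have "sum_list ?line = (\<Sum>i=1..n. a i)"
    by (metis sum_set_upt_conv_sum_list_nat set_upt atLeastLessThanSuc_atLeastAtMost)
  ultimately show ?thesis by simp
qed

definition zero_line_sums :: "nat \<Rightarrow> hypermatrix \<Rightarrow> bool" where
  "zero_line_sums n D \<longleftrightarrow>
     (\<forall>j\<in>{1..n}. \<forall>k\<in>{1..n}. (\<Sum>i=1..n. D i j k) = 0) \<and>
     (\<forall>i\<in>{1..n}. \<forall>k\<in>{1..n}. (\<Sum>j=1..n. D i j k) = 0) \<and>
     (\<forall>i\<in>{1..n}. \<forall>j\<in>{1..n}. (\<Sum>k=1..n. D i j k) = 0)"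

lemma ASHM_diff_zero_line_sums:
  assumes "ASHM n A" and "ASHM n B"
  shows "zero_line_sums n (\<lambda>i j k. A i j k - B i j k)"
  using assms alt_line_sum unfolding ASHM_def zero_line_sums_def
  by (simp add: sum_subtractf)

definition unit_diff :: "nat \<Rightarrow> nat \<Rightarrow> nat \<Rightarrow> 'a::ring_1" where
  "unit_diff i1 i2 a = of_bool (a = i1) - of_bool (a = i2)"

lemma Tblock_eq_prod_unit_diff:
  assumes "i1 \<noteq> i2" and "j1 \<noteq> j2" and "k1 \<noteq> k2"
  shows "Tblock i1 j1 k1 i2 j2 k2 a b c =
           unit_diff i1 i2 a * unit_diff j1 j2 b * unit_diff k1 k2 c"
  using assms unfolding Tblock_def unit_diff_def by auto

lemma sum_unit_diff_expansion:
  fixes g :: "nat \<Rightarrow> 'a::ring_1"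
  assumes "a \<in> {1..n}" and "(\<Sum>i=1..n. g i) = 0"
  shows "(\<Sum>i\<in>{1..<n}. unit_diff i n a * g i) = g a"
proof -
  have "{1..n} = insert n {1..<n}"
    using assms(1) by auto
  then have "(\<Sum>i=1..n. g i) = (\<Sum>i\<in>{1..<n}. g i) + g n"
    by (simp add: add.commute)
  then have rest: "(\<Sum>i\<in>{1..<n}. g i) = - g n"
    using assms(2) by (simp add: eq_neg_iff_add_eq_0)
  have "(\<Sum>i\<in>{1..<n}. unit_diff i n a * g i) =
          (\<Sum>i\<in>{1..<n}. of_bool (a = i) * g i) - of_bool (a = n) * (\<Sum>i\<in>{1..<n}. g i)"
    by (simp add: unit_diff_def left_diff_distrib sum_subtractf sum_distrib_left)
  also have "\<dots> = g a"
  proof (cases "a = n")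
    case True
    then show ?thesis using rest by simp
  next
    case False
    with assms(1) have "{1..<n} \<inter> {i. a = i} = {a}" by auto
    then show ?thesis by (simp add: False)
  qed
  finally show ?thesis .
qed

lemma zero_line_sums_corner_expansion:
  assumes D: "zero_line_sums n D" and abc: "a \<in> {1..n}" "b \<in> {1..n}" "c \<in> {1..n}"
  shows "D a b c =
           (\<Sum>(i, j, k)\<in>{1..<n} \<times> {1..<n} \<times> {1..<n}. D i j k * Tblock i j k n n n a b c)"
proof -
  note expand = sum_unit_diff_expansion[where 'a = int]
  have "(\<Sum>(i, j, k)\<in>{1..<n} \<times> {1..<n} \<times> {1..<n}. D i j k * Tblock i j k n n n a b c) =
        (\<Sum>i\<in>{1..<n}. unit_diff i n a * (\<Sum>j\<in>{1..<n}. unit_diff j n b *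
          (\<Sum>k\<in>{1..<n}. unit_diff k n c * D i j k)))"
    by (simp add: sum.cartesian_product[symmetric] Tblock_eq_prod_unit_diff sum_distrib_left
        mult_ac)
  also have "\<dots> = (\<Sum>i\<in>{1..<n}. unit_diff i n a * (\<Sum>j\<in>{1..<n}. unit_diff j n b * D i j c))"
    using D abc unfolding zero_line_sums_def
    by (intro sum.cong refl arg_cong2[where f = "(*)"] expand) auto
  also have "\<dots> = (\<Sum>i\<in>{1..<n}. unit_diff i n a * D i b c)"
    using D abc unfolding zero_line_sums_def
    by (intro sum.cong refl arg_cong2[where f = "(*)"] expand) auto
  also have "\<dots> = D a b c"
    using D abc unfolding zero_line_sums_def by (intro expand) auto
  finally show ?thesis ..
qed

lemma is_Tblock_Tblock:
  assumes "1 \<le> i1" "i1 < i2" "i2 \<le> n" "1 \<le> j1" "j1 < j2" "j2 \<le> n" "1 \<le> k1" "k1 < k2" "k2 \<le> n"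
  shows "is_Tblock n (Tblock i1 j1 k1 i2 j2 k2)"
proof -
  have "Tblock i1 j1 k1 i2 j2 k2 = (\<lambda>i j k. 1 * Tblock i1 j1 k1 i2 j2 k2 i j k)"
    by simp
  then show ?thesis
    unfolding is_Tblock_def using assms by blast
qed

lemma is_Tblock_sign:
  assumes "is_Tblock n M" and "s \<in> {1, -1}"
  shows "is_Tblock n (\<lambda>i j k. s * M i j k)"
proof -
  obtain i1 j1 k1 i2 j2 k2 s' where M: "1 \<le> i1" "i1 < i2" "i2 \<le> n" "1 \<le> j1" "j1 < j2" "j2 \<le> n"
      "1 \<le> k1" "k1 < k2" "k2 \<le> n" "s' \<in> {1, -1}"
      "M = (\<lambda>i j k. s' * Tblock i1 j1 k1 i2 j2 k2 i j k)"
    using assms(1) unfolding is_Tblock_def by blast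
  have "s * s' \<in> {1, -1}"
    using assms(2) M(10) by auto
  moreover have "(\<lambda>i j k. s * M i j k) = (\<lambda>i j k. (s * s') * Tblock i1 j1 k1 i2 j2 k2 i j k)"
    using M(11) by (simp add: mult.assoc)
  ultimately show ?thesis
    unfolding is_Tblock_def using M(1-9) by blast
qed

lemma int_combination_of_Tblocks:
  fixes X :: "'x \<Rightarrow> hypermatrix" and coeff :: "'x \<Rightarrow> int"
  assumes "finite S" and "\<forall>x\<in>S. is_Tblock n (X x)"
  shows "\<exists>Ts. (\<forall>M\<in>set Ts. is_Tblock n M) \<and>
           (\<forall>a b c. (\<Sum>x\<in>S. coeff x * X x a b c) = (\<Sum>M\<leftarrow>Ts. M a b c))"
  using assms
proof (induction S rule: finite_induct)
  case empty
  show ?case by (intro exI[of _ "[]"]) simp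
next
  case (insert x S)
  then obtain Ts where Ts: "\<forall>M\<in>set Ts. is_Tblock n M"
    "\<forall>a b c. (\<Sum>x\<in>S. coeff x * X x a b c) = (\<Sum>M\<leftarrow>Ts. M a b c)"
    by blast
  define copies where "copies = replicate (nat \<bar>coeff x\<bar>) (\<lambda>a b c. sgn (coeff x) * X x a b c)"
  have "is_Tblock n (\<lambda>a b c. sgn (coeff x) * X x a b c)" if "coeff x \<noteq> 0"
    using that insert.prems by (intro is_Tblock_sign) (auto simp: sgn_if)
  then have "\<forall>M\<in>set copies. is_Tblock n M"
    unfolding copies_def by simp
  moreover have "coeff x * X x a b c = (\<Sum>M\<leftarrow>copies. M a b c)" for a b c
    by (simp add: copies_def sum_list_replicate abs_mult_sgn mult.assoc[symmetric])
  ultimately have "(\<forall>M\<in>set (copies @ Ts). is_Tblock n M) \<and>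
      (\<forall>a b c. (\<Sum>y\<in>insert x S. coeff y * X y a b c) = (\<Sum>M\<leftarrow>copies @ Ts. M a b c))"
    using Ts insert.hyps by auto
  then show ?case ..
qed

lemma zero_line_sums_sum_of_Tblocks:
  assumes "zero_line_sums n D"
  shows "\<exists>Ts. (\<forall>M\<in>set Ts. is_Tblock n M) \<and>
           (\<forall>i\<in>{1..n}. \<forall>j\<in>{1..n}. \<forall>k\<in>{1..n}. D i j k = (\<Sum>M\<leftarrow>Ts. M i j k))"
proof -
  let ?S = "{1..<n} \<times> {1..<n} \<times> {1..<n}"
  have "\<forall>(i, j, k)\<in>?S. is_Tblock n (Tblock i j k n n n)"
    by (auto intro: is_Tblock_Tblock)
  then obtain Ts where Ts: "\<forall>M\<in>set Ts. is_Tblock n M"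
    and sum_Ts: "\<forall>a b c. (\<Sum>(i, j, k)\<in>?S. D i j k * Tblock i j k n n n a b c) =
                           (\<Sum>M\<leftarrow>Ts. M a b c)"
    using int_combination_of_Tblocks[of ?S n "\<lambda>(i, j, k). Tblock i j k n n n" "\<lambda>(i, j, k). D i j k"]
    unfolding case_prod_unfold by blast
  have "\<forall>a\<in>{1..n}. \<forall>b\<in>{1..n}. \<forall>c\<in>{1..n}. D a b c = (\<Sum>M\<leftarrow>Ts. M a b c)"
    using zero_line_sums_corner_expansion[OF assms] sum_Ts by simp
  with Ts show ?thesis
    by blast
qed

theorem lemma2p3:
  fixes n :: nat and A B :: hypermatrix
  assumes "ASHM n A" and "ASHM n B"
  shows "\<exists>Ts :: hypermatrix list. (\<forall>M\<in>set Ts. is_Tblock n M) \<and>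
           (\<forall>i\<in>{1..n}. \<forall>j\<in>{1..n}. \<forall>k\<in>{1..n}.
              A i j k - B i j k = (\<Sum>M\<leftarrow>Ts. M i j k))"
  by (rule zero_line_sums_sum_of_Tblocks[OF ASHM_diff_zero_line_sums[OF assms]])

end
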